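(* Let $\Omega\subset\mathbb{C}^n$ be a bounded domain, let $\mathcal R$ and $\mathcal R'$ be quasi-free Hilbert modules of rank $m$, $1\le m<\infty$, over $A(\Omega)$ with generating sets $\{f_i\}_{i=1}^m$ and $\{g_i\}_{i=1}^m$, and let $\delta=\delta(\mathcal R,\mathcal R')$. For each $z\in\Omega$, the map $\delta\otimes_{A(\Omega)}1_z:\mathcal R\otimes_{A(\Omega)}\mathbb C_z\to\mathcal R'\otimes_{A(\Omega)}\mathbb C_z$, $h\otimes 1_z\mapsto \delta h\otimes1_z$ ($h$ in the domain of $\delta$), is well-defined. Moreover, $\delta\otimes_{A(\Omega)}1_z$ is an invertible operator between these $m$-dimensional Hilbert spaces.
   Context: $A(\Omega)$ is the closure, in the supremum norm on $\Omega$, of the set of functions holomorphic on some neighbourhood of $\overline\Omega$; $\ell^2_m$ is the $m$-dimensional Hilbert space. A quasi-free Hilbert module of rank $m$ over $A(\Omega)$ is a Hilbert space $\mathcal R$ obtained as the completion of $A(\Omega)\otimes\ell^2_m$ (regarded as $\ell^2_m$-valued holomorphic functions on $\Omega$) with respect to an inner product such that: (1) for each $z\in\Omega$ evaluation at $z$ is bounded, with norm locally uniformly bounded in $z$; (2) $\|\varphi F\|_{\mathcal R}\le\|\varphi\|_{A(\Omega)}\|F\|_{\mathcal R}$; (3) if $(F_i)$ is Cauchy in $\mathcal R$-norm, then $F_i(z)\to0$ for all $z$ iff $\|F_i\|_{\mathcal R}\to0$. $A(\Omega)$ acts by multiplication. For $z\in\Omega$, $\mathbb C_z$ is $\mathbb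 C$ with action $\varphi\cdot\lambda=\varphi(z)\lambda$; the localization $\mathcal R\otimes_{A(\Omega)}\mathbb C_z$ is identified with $\mathcal R/\mathcal R_z$, where $\mathcal R_z$ is the closure of $A(\Omega)_z\mathcal R$, $A(\Omega)_z=\{\varphi\in A(\Omega):\varphi(z)=0\}$; $h\otimes1_z$ is the class of $h$. A generating set is $\{f_1,\dots,f_m\}\subset\mathcal R$ whose $A(\Omega)$-multiples span a dense subspace and with $\{f_i\otimes1_z\}$ a basis of $\mathcal R\otimes_{A(\Omega)}\mathbb C_z$ for each $z$. $\delta(\mathcal R,\mathcal R')$ is the closed, densely defined, one-to-one module transformation with dense range whose graph is the closure in $\mathcal R\oplus\mathcal R'$ of the span of $\{\varphi f_i\oplus\varphi g_i:\varphi\in A(\Omega),1\le i\le m\}$. *)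

theory Defs
  imports "HOL-Analysis.Analysis"
begin

text \<open>Points of C^n are vectors of type complex^'n; elements of
l2_m are vectors of type complex^'m (Euclidean norm). Functions on Omega are
represented as total functions that vanish outside Omega.\<close>

type_synonym ('n,'m) vfun = "complex^('n::finite) \<Rightarrow> complex^('m::finite)"

definition fadd :: "('n::finite,'m::finite) vfun \<Rightarrow> ('n::finite,'m::finite) vfun \<Rightarrow> ('n::finite,'m::finite) vfun" where
  "fadd F G = (\<lambda>w. F w + G w)"

definition fsub :: "('n::finite,'m::finite) vfun \<Rightarrow> ('n::finite,'m::finite) vfun \<Rightarrow> ('n::finite,'m::finite) vfun" where
  "fsub F G = (\<lambda>w. F w - G w)"

definition fscale :: "complex \<Rightarrow> ('n::finite,'m::finite) vfun \<Rightarrow> ('n::finite,'m::finite) vfun" where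
  "fscale c F = (\<lambda>w. c *s F w)"

definition fmul :: "(complex^'n \<Rightarrow> complex) \<Rightarrow> ('n::finite,'m::finite) vfun \<Rightarrow> ('n::finite,'m::finite) vfun" where
  "fmul \<phi> F = (\<lambda>w. \<phi> w *s F w)"

definition hol_on :: "(complex^'n) set \<Rightarrow> (complex^'n \<Rightarrow> complex) \<Rightarrow> bool" where
  "hol_on U f \<longleftrightarrow> open U \<and>
     (\<forall>z\<in>U. \<exists>L. (f has_derivative L) (at z) \<and> (\<forall>c x. L (c *s x) = c * L x))"

definition AOm :: "(complex^'n) set \<Rightarrow> (complex^'n \<Rightarrow> complex) set" where
  "AOm \<Omega> = {\<phi>. (\<forall>w. w \<notin> \<Omega> \<longrightarrow> \<phi> w = 0) \<and>
      (\<forall>\<epsilon>>0. \<exists>U g. open U \<and> closure \<Omega> \<subseteq> U \<and> hol_on U g \<and>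
                  (\<forall>w\<in>\<Omega>. cmod (\<phi> w - g w) \<le> \<epsilon>))}"

definition supnorm :: "(complex^'n) set \<Rightarrow> (complex^'n \<Rightarrow> complex) \<Rightarrow> real" where
  "supnorm \<Omega> \<phi> = (SUP w\<in>\<Omega>. cmod (\<phi> w))"

text \<open>A(Omega) tensor l2_m, viewed as l2_m-valued functions.\<close>
definition tensorA :: "(complex^'n) set \<Rightarrow> ('n::finite,'m::finite) vfun set" where
  "tensorA \<Omega> = {F. \<forall>i. (\<lambda>w. F w $ i) \<in> AOm \<Omega>}"

definition fspan :: "('n::finite,'m::finite) vfun set \<Rightarrow> ('n::finite,'m::finite) vfun set" where
  "fspan S = \<Inter>{V. S \<subseteq> V \<and> (\<lambda>w. 0) \<in> V \<and> (\<forall>F\<in>V. \<forall>G\<in>V. fadd F G \<in> V)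
                  \<and> (\<forall>c. \<forall>F\<in>V. fscale c F \<in> V)}"

definition pspan :: "(('n::finite,'m::finite) vfun \<times> ('n::finite,'m::finite) vfun) set \<Rightarrow> (('n::finite,'m::finite) vfun \<times> ('n::finite,'m::finite) vfun) set" where
  "pspan S = \<Inter>{V. S \<subseteq> V \<and> ((\<lambda>w. 0), (\<lambda>w. 0)) \<in> V
                  \<and> (\<forall>(F,G)\<in>V. \<forall>(F',G')\<in>V. (fadd F F', fadd G G') \<in> V)
                  \<and> (\<forall>c. \<forall>(F,G)\<in>V. (fscale c F, fscale c G) \<in> V)}"

type_synonym ('n,'m) ipr = "('n::finite,'m::finite) vfun \<Rightarrow> ('n::finite,'m::finite) vfun \<Rightarrow> complex"

definition hnorm :: "('n::finite,'m::finite) ipr \<Rightarrow> ('n::finite,'m::finite) vfun \<Rightarrow> real" where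
  "hnorm ip F = sqrt (Re (ip F F))"

definition hcauchy :: "('n::finite,'m::finite) ipr \<Rightarrow> (nat \<Rightarrow> ('n::finite,'m::finite) vfun) \<Rightarrow> bool" where
  "hcauchy ip X \<longleftrightarrow> (\<forall>\<epsilon>>0. \<exists>N. \<forall>k\<ge>N. \<forall>l\<ge>N. hnorm ip (fsub (X k) (X l)) < \<epsilon>)"

definition hclosure :: "('n::finite,'m::finite) vfun set \<Rightarrow> ('n::finite,'m::finite) ipr \<Rightarrow> ('n::finite,'m::finite) vfun set \<Rightarrow> ('n::finite,'m::finite) vfun set" where
  "hclosure R ip S = {F\<in>R. \<forall>\<epsilon>>0. \<exists>G\<in>S. hnorm ip (fsub F G) < \<epsilon>}"

definition quasi_free :: "(complex^'n) set \<Rightarrow> ('n::finite,'m::finite) vfun set \<Rightarrow> ('n::finite,'m::finite) ipr \<Rightarrow> bool" where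
  "quasi_free \<Omega> R ip \<longleftrightarrow>
     \<comment> \<open>functions on Omega; complex vector space\<close>
     (\<forall>F\<in>R. \<forall>w. w \<notin> \<Omega> \<longrightarrow> F w = 0) \<and>
     (\<lambda>w. 0) \<in> R \<and> (\<forall>F\<in>R. \<forall>G\<in>R. fadd F G \<in> R) \<and> (\<forall>c. \<forall>F\<in>R. fscale c F \<in> R) \<and>
     \<comment> \<open>inner product\<close>
     (\<forall>F\<in>R. \<forall>G\<in>R. \<forall>H\<in>R. ip (fadd F G) H = ip F H + ip G H) \<and>
     (\<forall>c. \<forall>F\<in>R. \<forall>G\<in>R. ip (fscale c F) G = c * ip F G) \<and>
     (\<forall>F\<in>R. \<forall>G\<in>R. ip G F = cnj (ip F G)) \<and>
     (\<forall>F\<in>R. Im (ip F F) = 0 \<and> Re (ip F F) \<ge> 0) \<and>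
     (\<forall>F\<in>R. ip F F = 0 \<longrightarrow> F = (\<lambda>w. 0)) \<and>
     \<comment> \<open>completeness\<close>
     (\<forall>X. range X \<subseteq> R \<and> hcauchy ip X \<longrightarrow>
          (\<exists>L\<in>R. (\<lambda>k. hnorm ip (fsub (X k) L)) \<longlonglongrightarrow> 0)) \<and>
     \<comment> \<open>completion of A(Omega) tensor l2_m\<close>
     tensorA \<Omega> \<subseteq> R \<and> hclosure R ip (tensorA \<Omega>) = R \<and>
     \<comment> \<open>(1) bounded evaluation, locally uniformly\<close>
     (\<forall>z\<in>\<Omega>. \<exists>r>0. \<exists>C. \<forall>w\<in>ball z r. \<forall>F\<in>R. norm (F w) \<le> C * hnorm ip F) \<and>
     \<comment> \<open>(2) contractive module action\<close>
     (\<forall>\<phi>\<in>AOm \<Omega>. \<forall>F\<in>R. fmul \<phi> F \<in> R \<and> hnorm ip (fmul \<phi> F) \<le> supnorm \<Omega> \<phi> * hnorm ip F) \<and>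
     \<comment> \<open>(3)\<close>
     (\<forall>X. range X \<subseteq> R \<and> hcauchy ip X \<longrightarrow>
          ((\<forall>w. (\<lambda>k. X k w) \<longlonglongrightarrow> 0) \<longleftrightarrow> (\<lambda>k. hnorm ip (X k)) \<longlonglongrightarrow> 0))"

text \<open>R_z: closure of A(Omega)_z R; the localization R tensor C_z is R / R_z.\<close>
definition locsub :: "(complex^'n) set \<Rightarrow> ('n::finite,'m::finite) vfun set \<Rightarrow> ('n::finite,'m::finite) ipr \<Rightarrow> complex^'n \<Rightarrow> ('n::finite,'m::finite) vfun set" where
  "locsub \<Omega> R ip z = hclosure R ip (fspan {fmul \<phi> F | \<phi> F. \<phi> \<in> AOm \<Omega> \<and> \<phi> z = 0 \<and> F \<in> R})"

text \<open>Quotient norm of the class h tensor 1_z in R / R_z.\<close>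
definition qnorm :: "('n::finite,'m::finite) ipr \<Rightarrow> ('n::finite,'m::finite) vfun set \<Rightarrow> ('n::finite,'m::finite) vfun \<Rightarrow> real" where
  "qnorm ip S h = Inf {hnorm ip (fsub h r) | r. r \<in> S}"

definition gen_set :: "(complex^'n) set \<Rightarrow> ('n::finite,'m::finite) vfun set \<Rightarrow> ('n::finite,'m::finite) ipr \<Rightarrow> ('m::finite \<Rightarrow> ('n::finite,'m::finite) vfun) \<Rightarrow> bool" where
  "gen_set \<Omega> R ip f \<longleftrightarrow>
     (\<forall>i. f i \<in> R) \<and>
     hclosure R ip (fspan {fmul \<phi> (f i) | \<phi> i. \<phi> \<in> AOm \<Omega>}) = R \<and>
     (\<forall>z\<in>\<Omega>.
        (\<forall>h\<in>R. \<exists>c. fsub h (\<lambda>w. \<Sum>i\<in>UNIV. c i *s f i w) \<in> locsub \<Omega> R ip z) \<and>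
        (\<forall>c. (\<lambda>w. \<Sum>i\<in>UNIV. c i *s f i w) \<in> locsub \<Omega> R ip z \<longrightarrow> (\<forall>i. c i = 0)))"

definition delta_graph :: "(complex^'n) set \<Rightarrow> ('n::finite,'m::finite) vfun set \<Rightarrow> ('n::finite,'m::finite) ipr \<Rightarrow>
     ('n::finite,'m::finite) vfun set \<Rightarrow> ('n::finite,'m::finite) ipr \<Rightarrow> ('m::finite \<Rightarrow> ('n::finite,'m::finite) vfun) \<Rightarrow> ('m \<Rightarrow> ('n::finite,'m::finite) vfun)
     \<Rightarrow> (('n::finite,'m::finite) vfun \<times> ('n::finite,'m::finite) vfun) set" where
  "delta_graph \<Omega> R ip R' ip' f g =
     {(F,G). F \<in> R \<and> G \<in> R' \<and>
        (\<forall>\<epsilon>>0. \<exists>(F0,G0)\<in>pspan {(fmul \<phi> (f i), fmul \<phi> (g i)) | \<phi> i. \<phi> \<in> AOm \<Omega>}.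
            sqrt ((hnorm ip (fsub F F0))\<^sup>2 + (hnorm ip' (fsub G G0))\<^sup>2) < \<epsilon>)}"

end

theory Submission
  imports Defs
begin

(* Write L and L' for the localizing subspaces of R and R' at z. As the generating set is a
   basis of R/L, every h in R is congruent modulo L to a unique combination sum a_i f_i, and,
   L being closed, the quotient norm of sum c_i f_i is bounded below by a multiple of |c|.
   The pairs (F, G) congruent to (sum c_i f_i, sum c_i g_i) for a common c form a linear space
   containing every generator (phi f_i, phi g_i) of the graph of delta, with c = phi(z) e_i,
   because phi - phi(z) vanishes at z. The lower bound on quotient norms makes this property
   survive the closure, so every (h, k) in the graph is congruent to (sum a_i f_i, sum a_i g_i)
   with the same a. Hence delta tensor 1_z maps sum a_i f_i tensor 1_z to sum a_i g_i tensor 1_z: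
   it is well defined and bijective, and bounded in both directions since both quotient norms are
   comparable to |a|. Only the algebraic structure of quasi-free modules enters. *)

section \<open>Inner products on spaces of vector-valued functions\<close>

lemma quadratic_nonneg_imp_le_sqrt:
  fixes a b p :: real
  assumes "\<And>t. 0 \<le> a + 2*t*p + t^2*b" "a \<ge> 0" "b \<ge> 0"
  shows "p \<le> sqrt a * sqrt b"
proof (cases "p \<le> 0")
  case True
  then show ?thesis using assms by (smt (verit) real_sqrt_ge_zero mult_nonneg_nonneg)
next
  case False
  show ?thesis
  proof (cases "b = 0")
    case True
    have "0 \<le> a + 2*(-(a+1)/(2*p))*p" using assms(1)[of "-(a+1)/(2*p)"] True by simp
    then show ?thesis using False by (simp add: field_simps)
  next
    case False
    then have b: "b > 0" using assms by simp
    have "0 \<le> a + 2*(-p/b)*p + (-p/b)^2*b" using assms(1) by blast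
    also have "\<dots> = a - p^2/b" using b by (simp add: field_simps power2_eq_square)
    finally have "p^2 \<le> a*b" using b by (simp add: field_simps)
    then show ?thesis by (simp add: real_le_rsqrt flip: real_sqrt_mult)
  qed
qed

lemma vfun_ops_apply [simp]:
  "fadd F G w = F w + G w" "fsub F G w = F w - G w" "fscale c F w = c *s F w"
  "fmul \<phi> F w = \<phi> w *s F w"
  by (simp_all add: fadd_def fsub_def fscale_def fmul_def)

locale vfun_inner_space =
  fixes R :: "('n::finite,'m::finite) vfun set"
    and ip :: "('n,'m) ipr"
  assumes zero_mem: "(\<lambda>w. 0) \<in> R"
    and fadd_mem: "\<And>F G. F \<in> R \<Longrightarrow> G \<in> R \<Longrightarrow> fadd F G \<in> R"
    and fscale_mem: "\<And>c F. F \<in> R \<Longrightarrow> fscale c F \<in> R"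
    and ip_add_left: "\<And>F G H. F \<in> R \<Longrightarrow> G \<in> R \<Longrightarrow> H \<in> R \<Longrightarrow> ip (fadd F G) H = ip F H + ip G H"
    and ip_scale_left: "\<And>c F G. F \<in> R \<Longrightarrow> G \<in> R \<Longrightarrow> ip (fscale c F) G = c * ip F G"
    and ip_conj_sym: "\<And>F G. F \<in> R \<Longrightarrow> G \<in> R \<Longrightarrow> ip G F = cnj (ip F G)"
    and ip_self_nonneg: "\<And>F. F \<in> R \<Longrightarrow> Im (ip F F) = 0 \<and> Re (ip F F) \<ge> 0"
begin

lemma fsub_mem: "F \<in> R \<Longrightarrow> G \<in> R \<Longrightarrow> fsub F G \<in> R"
  using fadd_mem[of F "fscale (-1) G"] fscale_mem[of G "-1"]
  by (simp add: fun_eq_iff fadd_def fsub_def fscale_def)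

lemma ip_add_right: "F \<in> R \<Longrightarrow> G \<in> R \<Longrightarrow> H \<in> R \<Longrightarrow> ip H (fadd F G) = ip H F + ip H G"
  by (metis complex_cnj_add fadd_mem ip_add_left ip_conj_sym)

lemma ip_scale_right: "F \<in> R \<Longrightarrow> G \<in> R \<Longrightarrow> ip F (fscale c G) = cnj c * ip F G"
  by (metis complex_cnj_mult fscale_mem ip_conj_sym ip_scale_left)

lemma hnorm_nonneg: "F \<in> R \<Longrightarrow> hnorm ip F \<ge> 0"
  using ip_self_nonneg by (simp add: hnorm_def)

lemma hnorm_square: "F \<in> R \<Longrightarrow> (hnorm ip F)^2 = Re (ip F F)"
  using ip_self_nonneg by (simp add: hnorm_def)

lemma ip_self_real: "F \<in> R \<Longrightarrow> ip F F = of_real (Re (ip F F))"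
  using ip_self_nonneg[of F] by (simp add: complex_eq_iff)

lemma hnorm_zero: "hnorm ip (\<lambda>w. 0) = 0"
  using ip_scale_left[OF zero_mem zero_mem, of 0]
  by (simp add: hnorm_def fscale_def)

lemma hnorm_fscale: "F \<in> R \<Longrightarrow> hnorm ip (fscale c F) = cmod c * hnorm ip F"
proof -
  assume F: "F \<in> R"
  have "ip (fscale c F) (fscale c F) = (c * cnj c) * of_real (Re (ip F F))"
    using F ip_self_real[OF F] by (simp add: ip_scale_left ip_scale_right fscale_mem)
  also have "\<dots> = of_real ((cmod c)^2 * Re (ip F F))"
    by (simp add: complex_norm_square[symmetric])
  finally show ?thesis by (simp add: hnorm_def real_sqrt_mult)
qed

lemma ip_Cauchy_Schwarz: "F \<in> R \<Longrightarrow> G \<in> R \<Longrightarrow> Re (ip F G) \<le> hnorm ip F * hnorm ip G"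
proof -
  assume F: "F \<in> R" and G: "G \<in> R"
  have "0 \<le> Re (ip F F) + 2*t*Re (ip F G) + t^2 * Re (ip G G)" for t :: real
  proof -
    let ?X = "fadd F (fscale (of_real t) G)"
    have "ip ?X ?X = ip F F + of_real t * ip F G + of_real t * ip G F + (of_real t)^2 * ip G G"
      using F G by (simp add: ip_add_left ip_add_right ip_scale_left ip_scale_right fadd_mem fscale_mem
          algebra_simps power2_eq_square)
    then have "Re (ip ?X ?X) = Re (ip F F) + 2*t*Re (ip F G) + t^2 * Re (ip G G)"
      using ip_conj_sym[OF F G] by (simp add: power2_eq_square)
    then show ?thesis using ip_self_nonneg[of ?X] F G by (simp add: fadd_mem fscale_mem)
  qed
  then show ?thesis
    using quadratic_nonneg_imp_le_sqrt ip_self_nonneg F G by (simp add: hnorm_def)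
qed

lemma hnorm_triangle: "F \<in> R \<Longrightarrow> G \<in> R \<Longrightarrow> hnorm ip (fadd F G) \<le> hnorm ip F + hnorm ip G"
proof -
  assume F: "F \<in> R" and G: "G \<in> R"
  have "Re (ip (fadd F G) (fadd F G)) = Re (ip F F) + 2 * Re (ip F G) + Re (ip G G)"
    using F G ip_conj_sym[OF F G] by (simp add: ip_add_left ip_add_right fadd_mem)
  also have "\<dots> \<le> (hnorm ip F + hnorm ip G)^2"
    using ip_Cauchy_Schwarz[OF F G] hnorm_square[OF F] hnorm_square[OF G]
    by (simp add: power2_eq_square algebra_simps)
  finally show ?thesis unfolding hnorm_def[of ip "fadd F G"]
    by (rule real_le_lsqrt[rotated]) (simp add: F G hnorm_nonneg)
qed

lemma hnorm_fsub_triangle: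
  "F \<in> R \<Longrightarrow> G \<in> R \<Longrightarrow> H \<in> R \<Longrightarrow> hnorm ip (fsub F H) \<le> hnorm ip (fsub F G) + hnorm ip (fsub G H)"
proof -
  assume "F \<in> R" "G \<in> R" "H \<in> R"
  moreover have "fadd (fsub F G) (fsub G H) = fsub F H" by (simp add: fun_eq_iff)
  ultimately show ?thesis using hnorm_triangle[of "fsub F G" "fsub G H"] by (simp add: fsub_mem)
qed

lemma hnorm_fsub_commute: "F \<in> R \<Longrightarrow> G \<in> R \<Longrightarrow> hnorm ip (fsub F G) = hnorm ip (fsub G F)"
proof -
  assume "F \<in> R" "G \<in> R"
  moreover have "fscale (-1) (fsub F G) = fsub G F" by (simp add: fun_eq_iff vec_eq_iff)
  ultimately show ?thesis using hnorm_fscale[of "fsub F G" "-1"] by (simp add: fsub_mem)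
qed

lemma hnorm_sum_le:
  assumes "finite A" "\<forall>i\<in>A. F i \<in> R"
  shows "(\<lambda>w. \<Sum>i\<in>A. c i *s F i w) \<in> R \<and>
    hnorm ip (\<lambda>w. \<Sum>i\<in>A. c i *s F i w) \<le> (\<Sum>i\<in>A. cmod (c i) * hnorm ip (F i))"
  using assms
proof (induction A rule: finite_induct)
  case empty
  then show ?case by (simp add: zero_mem hnorm_zero)
next
  case (insert a A)
  have "(\<lambda>w. \<Sum>i\<in>insert a A. c i *s F i w) = fadd (fscale (c a) (F a)) (\<lambda>w. \<Sum>i\<in>A. c i *s F i w)"
    using insert by (simp add: fun_eq_iff)
  moreover have "F a \<in> R" using insert by simp
  ultimately show ?case
    using insert hnorm_triangle[of "fscale (c a) (F a)" "\<lambda>w. \<Sum>i\<in>A. c i *s F i w"]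
    by (simp add: fadd_mem fscale_mem hnorm_fscale)
qed

end

section \<open>Subspaces, closures and quotient norms\<close>

definition fsubspace :: "('n::finite,'m::finite) vfun set \<Rightarrow> ('n,'m) vfun set \<Rightarrow> bool" where
  "fsubspace R S \<longleftrightarrow> S \<subseteq> R \<and> (\<lambda>w. 0) \<in> S \<and> (\<forall>F\<in>S. \<forall>G\<in>S. fadd F G \<in> S) \<and> (\<forall>c. \<forall>F\<in>S. fscale c F \<in> S)"

lemma fsubspace_fsub: "fsubspace R S \<Longrightarrow> F \<in> S \<Longrightarrow> G \<in> S \<Longrightarrow> fsub F G \<in> S"
proof -
  assume "fsubspace R S" "F \<in> S" "G \<in> S"
  then have "fadd F (fscale (-1) G) \<in> S" unfolding fsubspace_def by blast
  moreover have "fadd F (fscale (-1) G) = fsub F G" by (simp add: fun_eq_iff vec_eq_iff)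
  ultimately show ?thesis by simp
qed

lemma fsubspace_fsub_commute: "fsubspace R S \<Longrightarrow> fsub F G \<in> S \<Longrightarrow> fsub G F \<in> S"
proof -
  assume "fsubspace R S" "fsub F G \<in> S"
  then have "fscale (-1) (fsub F G) \<in> S" unfolding fsubspace_def by blast
  moreover have "fscale (-1) (fsub F G) = fsub G F" by (simp add: fun_eq_iff vec_eq_iff)
  ultimately show ?thesis by simp
qed

lemma fsubspace_fsub_trans: "fsubspace R S \<Longrightarrow> fsub F G \<in> S \<Longrightarrow> fsub G H \<in> S \<Longrightarrow> fsub F H \<in> S"
proof -
  assume "fsubspace R S" "fsub F G \<in> S" "fsub G H \<in> S"
  then have "fadd (fsub F G) (fsub G H) \<in> S" unfolding fsubspace_def by blast
  moreover have "fadd (fsub F G) (fsub G H) = fsub F H" by (simp add: fun_eq_iff)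
  ultimately show ?thesis by simp
qed

lemma fsubspace_fsub_fadd:
  "fsubspace R S \<Longrightarrow> fsub F G \<in> S \<Longrightarrow> fsub F' G' \<in> S \<Longrightarrow> fsub (fadd F F') (fadd G G') \<in> S"
proof -
  assume "fsubspace R S" "fsub F G \<in> S" "fsub F' G' \<in> S"
  then have "fadd (fsub F G) (fsub F' G') \<in> S" unfolding fsubspace_def by blast
  moreover have "fadd (fsub F G) (fsub F' G') = fsub (fadd F F') (fadd G G')" by (simp add: fun_eq_iff)
  ultimately show ?thesis by simp
qed

lemma fsubspace_fsub_fscale: "fsubspace R S \<Longrightarrow> fsub F G \<in> S \<Longrightarrow> fsub (fscale c F) (fscale c G) \<in> S"
proof -
  assume "fsubspace R S" "fsub F G \<in> S"
  then have "fscale c (fsub F G) \<in> S" unfolding fsubspace_def by blast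
  moreover have "fscale c (fsub F G) = fsub (fscale c F) (fscale c G)"
    by (simp add: fun_eq_iff vec_eq_iff algebra_simps)
  ultimately show ?thesis by simp
qed

lemma mem_fspan_iff: "F \<in> fspan S \<longleftrightarrow> (\<forall>V. S \<subseteq> V \<and> fsubspace V V \<longrightarrow> F \<in> V)"
  unfolding fspan_def fsubspace_def by auto

lemma fspan_fsubspace:
  assumes "S \<subseteq> R" "fsubspace R R"
  shows "fsubspace R (fspan S)"
proof -
  have "fspan S \<subseteq> R" using assms mem_fspan_iff by blast
  moreover have "(\<lambda>w. 0) \<in> fspan S"
    unfolding mem_fspan_iff fsubspace_def by blast
  moreover have "fadd F G \<in> fspan S" if "F \<in> fspan S" "G \<in> fspan S" for F G
    using that unfolding mem_fspan_iff fsubspace_def by blast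
  moreover have "fscale c F \<in> fspan S" if "F \<in> fspan S" for c F
    using that unfolding mem_fspan_iff fsubspace_def by blast
  ultimately show ?thesis unfolding fsubspace_def by blast
qed

lemma fspan_superset: "S \<subseteq> fspan S"
  using mem_fspan_iff by blast

definition pair_fsubspace :: "(('n::finite,'m::finite) vfun \<times> ('n,'m) vfun) set \<Rightarrow> bool" where
  "pair_fsubspace V \<longleftrightarrow> ((\<lambda>w. 0), (\<lambda>w. 0)) \<in> V
     \<and> (\<forall>(F,G)\<in>V. \<forall>(F',G')\<in>V. (fadd F F', fadd G G') \<in> V)
     \<and> (\<forall>c. \<forall>(F,G)\<in>V. (fscale c F, fscale c G) \<in> V)"

lemma pair_fsubspace_fadd:
  "pair_fsubspace V \<Longrightarrow> (F,G) \<in> V \<Longrightarrow> (F',G') \<in> V \<Longrightarrow> (fadd F F', fadd G G') \<in> V"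
  unfolding pair_fsubspace_def by fast

lemma pair_fsubspace_fscale: "pair_fsubspace V \<Longrightarrow> (F,G) \<in> V \<Longrightarrow> (fscale c F, fscale c G) \<in> V"
  unfolding pair_fsubspace_def by fast

lemma mem_pspan_iff: "x \<in> pspan P \<longleftrightarrow> (\<forall>V. P \<subseteq> V \<and> pair_fsubspace V \<longrightarrow> x \<in> V)"
  unfolding pspan_def pair_fsubspace_def by simp

lemma pspan_superset: "P \<subseteq> pspan P"
  using mem_pspan_iff by blast

lemma pspan_minimal: "P \<subseteq> V \<Longrightarrow> pair_fsubspace V \<Longrightarrow> pspan P \<subseteq> V"
  using mem_pspan_iff by blast

lemma pspan_pair_fsubspace: "pair_fsubspace (pspan P)"
proof -
  have "((\<lambda>w. 0), (\<lambda>w. 0)) \<in> pspan P"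
    unfolding mem_pspan_iff pair_fsubspace_def by blast
  moreover have "(fadd F F', fadd G G') \<in> pspan P" if "(F,G) \<in> pspan P" "(F',G') \<in> pspan P" for F G F' G'
    using that pair_fsubspace_fadd unfolding mem_pspan_iff by blast
  moreover have "(fscale c F, fscale c G) \<in> pspan P" if "(F,G) \<in> pspan P" for c F G
    using that pair_fsubspace_fscale unfolding mem_pspan_iff by blast
  ultimately show ?thesis unfolding pair_fsubspace_def by auto
qed

context vfun_inner_space
begin

lemma fsubspace_self: "fsubspace R R"
  using zero_mem fadd_mem fscale_mem by (simp add: fsubspace_def)

lemma hclosure_superset: "S \<subseteq> R \<Longrightarrow> S \<subseteq> hclosure R ip S"
proof
  fix F assume "S \<subseteq> R" "F \<in> S"
  moreover have "fsub F F = (\<lambda>w. 0)" by (simp add: fun_eq_iff)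
  ultimately show "F \<in> hclosure R ip S" unfolding hclosure_def using hnorm_zero by force
qed

lemma hclosure_fsubspace:
  assumes S: "fsubspace R S"
  shows "fsubspace R (hclosure R ip S)"
proof -
  have SR: "S \<subseteq> R" using S by (simp add: fsubspace_def)
  have fadd: "fadd F G \<in> hclosure R ip S" if F: "F \<in> hclosure R ip S" and G: "G \<in> hclosure R ip S" for F G
  proof -
    have "\<exists>H\<in>S. hnorm ip (fsub (fadd F G) H) < e" if e: "e > 0" for e
    proof -
      obtain F0 where F0: "F0 \<in> S" "hnorm ip (fsub F F0) < e/2"
        using F half_gt_zero[OF e] unfolding hclosure_def by blast
      obtain G0 where G0: "G0 \<in> S" "hnorm ip (fsub G G0) < e/2"
        using G e half_gt_zero[OF e] unfolding hclosure_def by blast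
      have "fsub (fadd F G) (fadd F0 G0) = fadd (fsub F F0) (fsub G G0)" by (simp add: fun_eq_iff)
      then have "hnorm ip (fsub (fadd F G) (fadd F0 G0)) \<le> hnorm ip (fsub F F0) + hnorm ip (fsub G G0)"
        using F G F0 G0 SR hnorm_triangle fsub_mem unfolding hclosure_def by (metis (no_types, lifting) mem_Collect_eq subsetD)
      moreover have "fadd F0 G0 \<in> S" using S F0 G0 by (simp add: fsubspace_def)
      ultimately show ?thesis using F0 G0 by (intro bexI[of _ "fadd F0 G0"]) auto
    qed
    then show ?thesis using F G unfolding hclosure_def by (simp add: fadd_mem)
  qed
  have fscale: "fscale c F \<in> hclosure R ip S" if F: "F \<in> hclosure R ip S" for F c
  proof -
    have "\<exists>H\<in>S. hnorm ip (fsub (fscale c F) H) < e" if e: "e > 0" for e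
    proof -
      have ce: "e / (cmod c + 1) > 0" using e by (simp add: add_nonneg_pos)
      obtain F0 where F0: "F0 \<in> S" "hnorm ip (fsub F F0) < e / (cmod c + 1)"
        using F ce unfolding hclosure_def by blast
      have FR: "fsub F F0 \<in> R" using F F0 SR unfolding hclosure_def by (auto intro: fsub_mem)
      have "fsub (fscale c F) (fscale c F0) = fscale c (fsub F F0)"
        by (simp add: fun_eq_iff vec_eq_iff algebra_simps)
      then have "hnorm ip (fsub (fscale c F) (fscale c F0)) = cmod c * hnorm ip (fsub F F0)"
        using FR by (simp add: hnorm_fscale)
      also have "\<dots> \<le> (cmod c + 1) * hnorm ip (fsub F F0)"
        using hnorm_nonneg[OF FR] by (simp add: mult_right_mono)
      also have "\<dots> < e" using F0(2) by (simp add: field_simps add_pos_nonneg)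
      finally show ?thesis using S F0 unfolding fsubspace_def by blast
    qed
    then show ?thesis using F unfolding hclosure_def by (simp add: fscale_mem)
  qed
  have "(\<lambda>w. 0) \<in> hclosure R ip S" using hclosure_superset[OF SR] S by (auto simp: fsubspace_def)
  then show ?thesis using fadd fscale by (auto simp: fsubspace_def hclosure_def)
qed

lemma hclosure_idem:
  assumes S: "fsubspace R S"
  shows "hclosure R ip (hclosure R ip S) = hclosure R ip S"
proof
  show "hclosure R ip S \<subseteq> hclosure R ip (hclosure R ip S)"
    by (rule hclosure_superset) (auto simp: hclosure_def)
  show "hclosure R ip (hclosure R ip S) \<subseteq> hclosure R ip S"
  proof
    fix F assume F: "F \<in> hclosure R ip (hclosure R ip S)"
    have "\<exists>G\<in>S. hnorm ip (fsub F G) < e" if e: "e > 0" for e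
    proof -
      obtain H where H: "H \<in> hclosure R ip S" "hnorm ip (fsub F H) < e/2"
        using F half_gt_zero[OF e] unfolding hclosure_def by blast
      obtain G where G: "G \<in> S" "hnorm ip (fsub H G) < e/2"
        using H(1) e half_gt_zero[OF e] unfolding hclosure_def by blast
      have "hnorm ip (fsub F G) \<le> hnorm ip (fsub F H) + hnorm ip (fsub H G)"
        using F H G S hnorm_fsub_triangle unfolding hclosure_def fsubspace_def by blast
      then show ?thesis using H G by (intro bexI[of _ G]) auto
    qed
    then show "F \<in> hclosure R ip S" using F unfolding hclosure_def by blast
  qed
qed

lemma qnorm_bdd_below: "fsubspace R L \<Longrightarrow> h \<in> R \<Longrightarrow> bdd_below {hnorm ip (fsub h r) | r. r \<in> L}"
  unfolding bdd_below_def fsubspace_def by (auto intro!: exI[of _ 0] hnorm_nonneg fsub_mem)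

lemma qnorm_nonneg: "fsubspace R L \<Longrightarrow> h \<in> R \<Longrightarrow> 0 \<le> qnorm ip L h"
  unfolding qnorm_def fsubspace_def by (intro cInf_greatest) (auto intro!: hnorm_nonneg fsub_mem)

lemma qnorm_le: "fsubspace R L \<Longrightarrow> h \<in> R \<Longrightarrow> r \<in> L \<Longrightarrow> qnorm ip L h \<le> hnorm ip (fsub h r)"
  unfolding qnorm_def by (rule cInf_lower) (blast, rule qnorm_bdd_below)

lemma qnorm_le_hnorm: "fsubspace R L \<Longrightarrow> h \<in> R \<Longrightarrow> qnorm ip L h \<le> hnorm ip h"
  using qnorm_le[of L h "\<lambda>w. 0"] by (simp add: fsubspace_def fsub_def)

lemma qnorm_le_qnorm_add_hnorm:
  assumes L: "fsubspace R L" and x: "x \<in> R" and y: "y \<in> R"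
  shows "qnorm ip L x \<le> qnorm ip L y + hnorm ip (fsub x y)"
proof -
  have "qnorm ip L x - hnorm ip (fsub x y) \<le> qnorm ip L y"
    unfolding qnorm_def[of ip L y]
  proof (rule cInf_greatest)
    show "{hnorm ip (fsub y r) | r. r \<in> L} \<noteq> {}" using L by (auto simp: fsubspace_def)
    fix t assume "t \<in> {hnorm ip (fsub y r) | r. r \<in> L}"
    then obtain r where r: "r \<in> L" "t = hnorm ip (fsub y r)" by auto
    have "qnorm ip L x \<le> hnorm ip (fsub x r)" using qnorm_le[OF L x r(1)] .
    also have "\<dots> \<le> hnorm ip (fsub x y) + hnorm ip (fsub y r)"
      using hnorm_fsub_triangle x y r L by (auto simp: fsubspace_def)
    finally show "qnorm ip L x - hnorm ip (fsub x y) \<le> t" using r by simp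
  qed
  then show ?thesis by simp
qed

lemma qnorm_cong:
  assumes L: "fsubspace R L" and x: "x \<in> R" and y: "y \<in> R" and xy: "fsub x y \<in> L"
  shows "qnorm ip L x = qnorm ip L y"
proof -
  have le: "qnorm ip L x \<le> qnorm ip L y" if x: "x \<in> R" and xy: "fsub x y \<in> L" for x y
    unfolding qnorm_def[of ip L y]
  proof (rule cInf_greatest)
    show "{hnorm ip (fsub y r) | r. r \<in> L} \<noteq> {}" using L by (auto simp: fsubspace_def)
    fix t assume "t \<in> {hnorm ip (fsub y r) | r. r \<in> L}"
    then obtain r where r: "r \<in> L" "t = hnorm ip (fsub y r)" by auto
    have "fadd (fsub x y) r \<in> L" using L xy r by (simp add: fsubspace_def)
    moreover have "fsub x (fadd (fsub x y) r) = fsub y r" by (simp add: fun_eq_iff)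
    ultimately show "qnorm ip L x \<le> t" using qnorm_le[OF L x, of "fadd (fsub x y) r"] r by simp
  qed
  show ?thesis using le[OF x xy] le[OF y fsubspace_fsub_commute[OF L xy]] by simp
qed

lemma qnorm_fscale_le:
  assumes L: "fsubspace R L" and x: "x \<in> R"
  shows "qnorm ip L (fscale c x) \<le> cmod c * qnorm ip L x"
proof (cases "c = 0")
  case True
  then show ?thesis using qnorm_le[OF L fscale_mem[OF x], of "\<lambda>w. 0" c] L
    by (simp add: fsubspace_def hnorm_zero fsub_def fscale_def)
next
  case False
  have "qnorm ip L (fscale c x) / cmod c \<le> qnorm ip L x"
    unfolding qnorm_def[of ip L x]
  proof (rule cInf_greatest)
    show "{hnorm ip (fsub x r) | r. r \<in> L} \<noteq> {}" using L by (auto simp: fsubspace_def)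
    fix t assume "t \<in> {hnorm ip (fsub x r) | r. r \<in> L}"
    then obtain r where r: "r \<in> L" "t = hnorm ip (fsub x r)" by auto
    have "fscale c r \<in> L" using L r by (simp add: fsubspace_def)
    then have "qnorm ip L (fscale c x) \<le> hnorm ip (fsub (fscale c x) (fscale c r))"
      by (rule qnorm_le[OF L fscale_mem[OF x]])
    moreover have "fsub (fscale c x) (fscale c r) = fscale c (fsub x r)"
      by (simp add: fun_eq_iff vec_eq_iff algebra_simps)
    ultimately have "qnorm ip L (fscale c x) \<le> cmod c * t"
      using hnorm_fscale[OF fsub_mem[OF x], of r c] r L by (auto simp: fsubspace_def)
    then show "qnorm ip L (fscale c x) / cmod c \<le> t" using False by (simp add: field_simps mult.commute)
  qed
  then show ?thesis using False by (simp add: field_simps mult.commute)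
qed

lemma qnorm_eq_0_if_mem: "fsubspace R L \<Longrightarrow> x \<in> L \<Longrightarrow> qnorm ip L x = 0"
  using qnorm_le[of L x x] qnorm_nonneg[of L x] hnorm_zero
  by (force simp: fsubspace_def fsub_def)

lemma qnorm_eq_0_imp_mem:
  assumes L: "fsubspace R L" and closed: "hclosure R ip L = L" and x: "x \<in> R"
    and q: "qnorm ip L x \<le> 0"
  shows "x \<in> L"
proof -
  have "\<exists>r\<in>L. hnorm ip (fsub x r) < e" if e: "e > 0" for e
  proof -
    have "{hnorm ip (fsub x r) | r. r \<in> L} \<noteq> {}" using L by (auto simp: fsubspace_def)
    moreover have "Inf {hnorm ip (fsub x r) | r. r \<in> L} < e" using q e unfolding qnorm_def by linarith
    ultimately have "\<exists>t\<in>{hnorm ip (fsub x r) | r. r \<in> L}. t < e" by (rule cInf_lessD)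
    then show ?thesis by blast
  qed
  then have "x \<in> hclosure R ip L" using x unfolding hclosure_def by blast
  then show ?thesis using closed by simp
qed

end

section \<open>Linear combinations of generators\<close>

definition fcomb :: "('m::finite \<Rightarrow> ('n::finite,'m) vfun) \<Rightarrow> complex^'m \<Rightarrow> ('n,'m) vfun" where
  "fcomb f c = (\<lambda>w. \<Sum>i\<in>UNIV. c$i *s f i w)"

lemma fcomb_zero: "fcomb f 0 = (\<lambda>w. 0)"
  by (simp add: fcomb_def)

lemma fcomb_add: "fcomb f (c + d) = fadd (fcomb f c) (fcomb f d)"
  by (simp add: fun_eq_iff vec_eq_iff fcomb_def sum.distrib algebra_simps)

lemma fcomb_diff: "fcomb f (c - d) = fsub (fcomb f c) (fcomb f d)"
  by (simp add: fun_eq_iff vec_eq_iff fcomb_def sum_subtractf algebra_simps)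

lemma fcomb_smult: "fcomb f (a *s c) = fscale a (fcomb f c)"
  by (simp add: fun_eq_iff vec_eq_iff fcomb_def sum_distrib_left algebra_simps)

lemma fcomb_scaleR: "fcomb f (r *\<^sub>R c) = fscale (of_real r) (fcomb f c)"
  by (simp add: fun_eq_iff vec_eq_iff fcomb_def sum_distrib_left algebra_simps; simp add: scaleR_conv_of_real)

lemma fcomb_axis: "fcomb f (axis i a) = fscale a (f i)"
proof -
  have "(\<Sum>j\<in>UNIV. axis i a $ j *s f j w) = (\<Sum>j\<in>UNIV. if j = i then a *s f j w else 0)" for w
    by (intro sum.cong) (auto simp: axis_def)
  then show ?thesis by (simp add: fun_eq_iff fcomb_def)
qed

lemma pair_fsubspace_fcomb:
  assumes V: "pair_fsubspace V" and fg: "\<forall>i. (f i, g i) \<in> V"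
  shows "(fcomb f c, fcomb g c) \<in> V"
proof -
  have "((\<lambda>w. \<Sum>i\<in>A. c$i *s f i w), (\<lambda>w. \<Sum>i\<in>A. c$i *s g i w)) \<in> V" if "finite A" for A
    using that
  proof (induction A rule: finite_induct)
    case empty
    then show ?case using V by (simp add: pair_fsubspace_def)
  next
    case (insert a A)
    have "(fadd (fscale (c$a) (f a)) (\<lambda>w. \<Sum>i\<in>A. c$i *s f i w),
           fadd (fscale (c$a) (g a)) (\<lambda>w. \<Sum>i\<in>A. c$i *s g i w)) \<in> V"
      using insert.IH fg by (intro pair_fsubspace_fadd[OF V] pair_fsubspace_fscale[OF V]) auto
    then show ?case using insert by (simp add: fadd_def fscale_def)
  qed
  then show ?thesis by (simp add: fcomb_def)
qed

lemma pair_fsubspace_fcomb_cong: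
  assumes R: "fsubspace R R" and R': "fsubspace R' R'" and L: "fsubspace R L" and L': "fsubspace R' L'"
  shows "pair_fsubspace
    {(F, G). F \<in> R \<and> G \<in> R' \<and> (\<exists>c. fsub F (fcomb f c) \<in> L \<and> fsub G (fcomb g c) \<in> L')}"
    (is "pair_fsubspace ?V")
proof -
  have "fsub (\<lambda>w. 0) (fcomb f 0) = (\<lambda>w. 0)" "fsub (\<lambda>w. 0) (fcomb g 0) = (\<lambda>w. 0)"
    by (simp_all add: fcomb_zero fun_eq_iff)
  then have "fsub (\<lambda>w. 0) (fcomb f 0) \<in> L" "fsub (\<lambda>w. 0) (fcomb g 0) \<in> L'"
    using L L' by (simp_all add: fsubspace_def)
  moreover have "(\<lambda>w. 0) \<in> R" "(\<lambda>w. 0) \<in> R'" using R R' by (simp_all add: fsubspace_def)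
  ultimately have "((\<lambda>w. 0), (\<lambda>w. 0)) \<in> ?V" by (simp only: mem_Collect_eq case_prod_conv) blast
  moreover have "(fadd F F', fadd G G') \<in> ?V" if V: "(F, G) \<in> ?V" "(F', G') \<in> ?V" for F G F' G'
  proof -
    obtain c c' where c: "F \<in> R" "G \<in> R'" "fsub F (fcomb f c) \<in> L" "fsub G (fcomb g c) \<in> L'"
      and c': "F' \<in> R" "G' \<in> R'" "fsub F' (fcomb f c') \<in> L" "fsub G' (fcomb g c') \<in> L'"
      using V[unfolded mem_Collect_eq case_prod_conv] by blast
    have "fadd F F' \<in> R" "fadd G G' \<in> R'" using R R' c c' by (simp_all add: fsubspace_def)
    moreover have "fsub (fadd F F') (fcomb f (c + c')) \<in> L" "fsub (fadd G G') (fcomb g (c + c')) \<in> L'"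
      unfolding fcomb_add using fsubspace_fsub_fadd[OF L c(3) c'(3)] fsubspace_fsub_fadd[OF L' c(4) c'(4)]
      by simp_all
    ultimately show ?thesis by (simp only: mem_Collect_eq case_prod_conv) blast
  qed
  moreover have "(fscale a F, fscale a G) \<in> ?V" if V: "(F, G) \<in> ?V" for a F G
  proof -
    obtain c where c: "F \<in> R" "G \<in> R'" "fsub F (fcomb f c) \<in> L" "fsub G (fcomb g c) \<in> L'"
      using V[unfolded mem_Collect_eq case_prod_conv] by blast
    have "fscale a F \<in> R" "fscale a G \<in> R'" using R R' c by (simp_all add: fsubspace_def)
    moreover have "fsub (fscale a F) (fcomb f (a *s c)) \<in> L" "fsub (fscale a G) (fcomb g (a *s c)) \<in> L'"
      unfolding fcomb_smult using fsubspace_fsub_fscale[OF L c(3)] fsubspace_fsub_fscale[OF L' c(4)]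
      by simp_all
    ultimately show ?thesis by (simp only: mem_Collect_eq case_prod_conv) blast
  qed
  ultimately show ?thesis unfolding pair_fsubspace_def by blast
qed

context vfun_inner_space
begin

lemma fcomb_mem: "\<forall>i. f i \<in> R \<Longrightarrow> fcomb f c \<in> R"
  using hnorm_sum_le[of UNIV f "\<lambda>i. c$i"] by (simp add: fcomb_def)

lemma hnorm_fcomb_le:
  assumes f: "\<forall>i. f i \<in> R"
  shows "hnorm ip (fcomb f c) \<le> norm c * (\<Sum>i\<in>UNIV. hnorm ip (f i))"
proof -
  have "hnorm ip (fcomb f c) \<le> (\<Sum>i\<in>UNIV. cmod (c$i) * hnorm ip (f i))"
    using hnorm_sum_le[of UNIV f "\<lambda>i. c$i"] f by (simp add: fcomb_def)
  also have "\<dots> \<le> (\<Sum>i\<in>UNIV. norm c * hnorm ip (f i))"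
    using f by (intro sum_mono mult_right_mono) (auto simp: Finite_Cartesian_Product.norm_nth_le hnorm_nonneg)
  finally show ?thesis by (simp add: sum_distrib_left)
qed

(* The quotient norm is a Lipschitz function of the coefficients, positive on the compact unit
   sphere of C^m. *)
lemma qnorm_fcomb_lower_bound:
  assumes L: "fsubspace R L" and closed: "hclosure R ip L = L" and f: "\<forall>i. f i \<in> R"
    and indep: "\<And>c. fcomb f c \<in> L \<Longrightarrow> c = 0"
  shows "\<exists>\<mu>>0. \<forall>c. \<mu> * norm c \<le> qnorm ip L (fcomb f c)"
proof -
  define N where "N c = qnorm ip L (fcomb f c)" for c
  define M where "M = (\<Sum>i\<in>UNIV. hnorm ip (f i))"
  have M: "M \<ge> 0" unfolding M_def using f by (simp add: sum_nonneg hnorm_nonneg)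
  have N_le: "N c \<le> N d + M * norm (c - d)" for c d
  proof -
    have "N c \<le> N d + hnorm ip (fsub (fcomb f c) (fcomb f d))"
      unfolding N_def using L f by (intro qnorm_le_qnorm_add_hnorm fcomb_mem)
    also have "hnorm ip (fsub (fcomb f c) (fcomb f d)) \<le> norm (c - d) * M"
      unfolding fcomb_diff[symmetric] M_def using f by (rule hnorm_fcomb_le)
    finally show ?thesis by (simp add: mult.commute)
  qed
  have "M-lipschitz_on (sphere 0 1) N"
  proof (rule lipschitz_onI[OF _ M])
    fix x y :: "complex^'m"
    show "dist (N x) (N y) \<le> M * dist x y"
      using N_le[of x y] N_le[of y x] by (simp add: dist_norm norm_minus_commute abs_le_iff)
  qed
  then have "continuous_on (sphere 0 1) N" by (rule lipschitz_on_continuous_on)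
  then obtain u where u: "u \<in> sphere 0 1" "\<forall>y\<in>sphere 0 1. N u \<le> N y"
    using continuous_attains_inf[OF compact_sphere, of 0 1 N] by auto
  have "N u > 0"
  proof (rule ccontr)
    assume "\<not> N u > 0"
    then have "fcomb f u \<in> L"
      unfolding N_def using qnorm_eq_0_imp_mem[OF L closed fcomb_mem[OF f]] by simp
    then show False using indep u(1) by fastforce
  qed
  moreover have "N u * norm c \<le> N c" for c
  proof (cases "c = 0")
    case True
    then show ?thesis unfolding N_def using qnorm_nonneg[OF L fcomb_mem[OF f]] by simp
  next
    case False
    then have nc: "norm c > 0" by simp
    have "(1 / norm c) *\<^sub>R c \<in> sphere 0 1" using nc by simp
    then have "N u \<le> N ((1 / norm c) *\<^sub>R c)" using u by blast
    also have "\<dots> \<le> cmod (of_real (1 / norm c)) * N c"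
      unfolding N_def fcomb_scaleR by (rule qnorm_fscale_le[OF L fcomb_mem[OF f]])
    also have "\<dots> = N c / norm c" using nc by (simp add: norm_divide)
    finally show ?thesis using nc by (simp add: field_simps)
  qed
  ultimately show ?thesis unfolding N_def by (auto simp: mult.commute)
qed

lemma fcomb_coeff_dist_le:
  assumes L: "fsubspace R L" and f: "\<forall>i. f i \<in> R"
    and \<mu>: "\<forall>c. \<mu> * norm c \<le> qnorm ip L (fcomb f c)"
    and h: "h \<in> R" "fsub h (fcomb f a) \<in> L" and F: "F \<in> R" "fsub F (fcomb f c) \<in> L"
  shows "\<mu> * norm (c - a) \<le> hnorm ip (fsub h F)"
proof -
  have "fsub (fcomb f (c - a)) (fsub F h) = fsub (fsub h (fcomb f a)) (fsub F (fcomb f c))"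
    by (simp add: fcomb_diff fun_eq_iff)
  then have "fsub (fcomb f (c - a)) (fsub F h) \<in> L" using fsubspace_fsub[OF L h(2) F(2)] by simp
  then have "qnorm ip L (fcomb f (c - a)) = qnorm ip L (fsub F h)"
    using L f h F by (intro qnorm_cong fcomb_mem fsub_mem)
  also have "\<dots> \<le> hnorm ip (fsub F h)" using L F h by (intro qnorm_le_hnorm fsub_mem)
  also have "\<dots> = hnorm ip (fsub h F)" using F(1) h(1) by (rule hnorm_fsub_commute)
  finally show ?thesis using \<mu> order_trans by blast
qed

lemma qnorm_fsub_fcomb_le:
  assumes L: "fsubspace R L" and g: "\<forall>i. g i \<in> R"
    and k: "k \<in> R" and G: "G \<in> R" "fsub G (fcomb g c) \<in> L"
  shows "qnorm ip L (fsub k (fcomb g a)) \<le> hnorm ip (fsub k G) + norm (c - a) * (\<Sum>i\<in>UNIV. hnorm ip (g i))"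
proof -
  let ?y = "fadd (fsub k G) (fcomb g (c - a))"
  have y: "?y \<in> R" using k G g by (intro fadd_mem fsub_mem fcomb_mem)
  have "fsub (fsub k (fcomb g a)) ?y = fsub G (fcomb g c)" by (simp add: fcomb_diff fun_eq_iff)
  then have "qnorm ip L (fsub k (fcomb g a)) = qnorm ip L ?y"
    using L k g y G by (intro qnorm_cong fsub_mem fcomb_mem) auto
  also have "\<dots> \<le> hnorm ip ?y" using L y by (rule qnorm_le_hnorm)
  also have "\<dots> \<le> hnorm ip (fsub k G) + hnorm ip (fcomb g (c - a))"
    using k G g by (intro hnorm_triangle fsub_mem fcomb_mem)
  also have "\<dots> \<le> hnorm ip (fsub k G) + norm (c - a) * (\<Sum>i\<in>UNIV. hnorm ip (g i))"
    using hnorm_fcomb_le[OF g] by simp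
  finally show ?thesis .
qed

end

section \<open>Localization of quasi-free modules\<close>

lemma quasi_free_inner_space: "quasi_free \<Omega> R ip \<Longrightarrow> vfun_inner_space R ip"
  unfolding quasi_free_def vfun_inner_space_def by (elim conjE) (intro conjI allI impI; blast)

lemma quasi_free_vanishing: "quasi_free \<Omega> R ip \<Longrightarrow> F \<in> R \<Longrightarrow> w \<notin> \<Omega> \<Longrightarrow> F w = 0"
  unfolding quasi_free_def by (elim conjE) blast

lemma quasi_free_fmul_mem:
  assumes "quasi_free \<Omega> R ip" "\<phi> \<in> AOm \<Omega>" "F \<in> R"
  shows "fmul \<phi> F \<in> R"
proof -
  have "\<forall>\<phi>\<in>AOm \<Omega>. \<forall>F\<in>R. fmul \<phi> F \<in> R \<and> hnorm ip (fmul \<phi> F) \<le> supnorm \<Omega> \<phi> * hnorm ip F"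
    using assms(1) unfolding quasi_free_def by (elim conjE) assumption
  then show ?thesis using assms(2,3) by blast
qed

lemma AOm_indicator: "(indicator \<Omega> :: complex^'n \<Rightarrow> complex) \<in> AOm \<Omega>"
proof -
  have "hol_on UNIV (\<lambda>w::complex^'n. 1::complex)"
    unfolding hol_on_def by (auto intro!: exI[of _ "\<lambda>h. 0"])
  then show ?thesis unfolding AOm_def
    by (auto intro!: exI[of _ UNIV] exI[of _ "\<lambda>w::complex^'n. 1::complex"])
qed

lemma AOm_diff_indicator:
  assumes "\<phi> \<in> AOm \<Omega>"
  shows "(\<lambda>w. \<phi> w - a * indicator \<Omega> w) \<in> AOm \<Omega>"
proof -
  have "\<exists>U g. open U \<and> closure \<Omega> \<subseteq> U \<and> hol_on U g \<and>
      (\<forall>w\<in>\<Omega>. cmod ((\<phi> w - a * indicator \<Omega> w) - g w) \<le> e)" if e: "e > 0" for e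
  proof -
    obtain U g where Ug: "open U" "closure \<Omega> \<subseteq> U" "hol_on U g" "\<forall>w\<in>\<Omega>. cmod (\<phi> w - g w) \<le> e"
      using assms e unfolding AOm_def by blast
    have "hol_on U (\<lambda>w. g w - a)"
      unfolding hol_on_def
    proof (intro conjI ballI)
      fix x assume "x \<in> U"
      then obtain L where L: "(g has_derivative L) (at x)" "\<forall>c x. L (c *s x) = c * L x"
        using Ug(3) unfolding hol_on_def by blast
      have "((\<lambda>w. g w - a) has_derivative (\<lambda>h. L h - 0)) (at x)"
        by (intro has_derivative_diff L(1) has_derivative_const)
      then show "\<exists>L. ((\<lambda>w. g w - a) has_derivative L) (at x) \<and> (\<forall>c x. L (c *s x) = c * L x)"
        using L(2) by auto
    qed (rule Ug(1))
    then show ?thesis using Ug by (intro exI[of _ U] exI[of _ "\<lambda>w. g w - a"]) auto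
  qed
  then show ?thesis using assms unfolding AOm_def by simp
qed

lemma locsub_generators_subset:
  "quasi_free \<Omega> R ip \<Longrightarrow> {fmul \<phi> F | \<phi> F. \<phi> \<in> AOm \<Omega> \<and> \<phi> z = 0 \<and> F \<in> R} \<subseteq> R"
  using quasi_free_fmul_mem by blast

lemma locsub_fsubspace:
  assumes "quasi_free \<Omega> R ip"
  shows "fsubspace R (locsub \<Omega> R ip z)"
proof -
  interpret vfun_inner_space R ip using assms by (rule quasi_free_inner_space)
  show ?thesis unfolding locsub_def
    by (intro hclosure_fsubspace fspan_fsubspace fsubspace_self locsub_generators_subset[OF assms])
qed

lemma hclosure_locsub:
  assumes "quasi_free \<Omega> R ip"
  shows "hclosure R ip (locsub \<Omega> R ip z) = locsub \<Omega> R ip z"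
proof -
  interpret vfun_inner_space R ip using assms by (rule quasi_free_inner_space)
  show ?thesis unfolding locsub_def
    by (intro hclosure_idem fspan_fsubspace fsubspace_self locsub_generators_subset[OF assms])
qed

lemma fmul_mem_locsub:
  assumes q: "quasi_free \<Omega> R ip" and "\<phi> \<in> AOm \<Omega>" "\<phi> z = 0" "F \<in> R"
  shows "fmul \<phi> F \<in> locsub \<Omega> R ip z"
proof -
  interpret vfun_inner_space R ip using q by (rule quasi_free_inner_space)
  let ?S = "{fmul \<phi> F | \<phi> F. \<phi> \<in> AOm \<Omega> \<and> \<phi> z = 0 \<and> F \<in> R}"
  have "fspan ?S \<subseteq> R"
    using fspan_fsubspace[OF locsub_generators_subset[OF q] fsubspace_self] by (simp add: fsubspace_def)
  then have "fspan ?S \<subseteq> locsub \<Omega> R ip z" unfolding locsub_def by (rule hclosure_superset)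
  moreover have "fmul \<phi> F \<in> ?S" using assms by blast
  then have "fmul \<phi> F \<in> fspan ?S" using fspan_superset[of ?S] by blast
  ultimately show ?thesis by blast
qed

lemma fmul_fscale_cong_locsub:
  assumes q: "quasi_free \<Omega> R ip" and z: "z \<in> \<Omega>" and \<phi>: "\<phi> \<in> AOm \<Omega>" and F: "F \<in> R"
  shows "fsub (fmul \<phi> F) (fscale (\<phi> z) F) \<in> locsub \<Omega> R ip z"
proof -
  interpret vfun_inner_space R ip using q by (rule quasi_free_inner_space)
  define \<psi> where "\<psi> w = \<phi> w - \<phi> z * indicator \<Omega> w" for w
  have "\<psi> \<in> AOm \<Omega>" "\<psi> z = 0" using AOm_diff_indicator[OF \<phi>] z unfolding \<psi>_def by auto
  then have "fmul \<psi> F \<in> locsub \<Omega> R ip z" using fmul_mem_locsub[OF q _ _ F] by blast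
  also have "fmul \<psi> F = fsub (fmul \<phi> F) (fscale (\<phi> z) F)"
    using quasi_free_vanishing[OF q F] by (auto simp: fun_eq_iff \<psi>_def indicator_def algebra_simps)
  finally show ?thesis .
qed

lemma gen_set_mem: "gen_set \<Omega> R ip f \<Longrightarrow> f i \<in> R"
  unfolding gen_set_def by blast

lemma gen_set_fcomb_cong:
  assumes "gen_set \<Omega> R ip f" "z \<in> \<Omega>" "h \<in> R"
  shows "\<exists>a. fsub h (fcomb f a) \<in> locsub \<Omega> R ip z"
proof -
  obtain c where "fsub h (\<lambda>w. \<Sum>i\<in>UNIV. c i *s f i w) \<in> locsub \<Omega> R ip z"
    using assms unfolding gen_set_def by blast
  then have "fsub h (fcomb f (\<chi> i. c i)) \<in> locsub \<Omega> R ip z" by (simp add: fcomb_def)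
  then show ?thesis ..
qed

lemma gen_set_fcomb_indep:
  assumes "gen_set \<Omega> R ip f" "z \<in> \<Omega>" "fcomb f c \<in> locsub \<Omega> R ip z"
  shows "c = 0"
proof -
  have "(\<lambda>w. \<Sum>i\<in>UNIV. (\<lambda>i. c$i) i *s f i w) \<in> locsub \<Omega> R ip z" using assms(3) by (simp add: fcomb_def)
  then have "\<forall>i. c$i = 0" using assms(1,2) unfolding gen_set_def by blast
  then show ?thesis by (simp add: vec_eq_iff)
qed

lemma gen_set_qnorm_fcomb_lower_bound:
  assumes q: "quasi_free \<Omega> R ip" and gen: "gen_set \<Omega> R ip f" and z: "z \<in> \<Omega>"
  shows "\<exists>\<mu>>0. \<forall>c. \<mu> * norm c \<le> qnorm ip (locsub \<Omega> R ip z) (fcomb f c)"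
proof -
  interpret vfun_inner_space R ip using q by (rule quasi_free_inner_space)
  show ?thesis
    using locsub_fsubspace[OF q] hclosure_locsub[OF q] gen_set_mem[OF gen] gen_set_fcomb_indep[OF gen z]
    by (intro qnorm_fcomb_lower_bound) auto
qed

section \<open>The graph of delta modulo the localizing subspaces\<close>

lemma fmul_indicator: "quasi_free \<Omega> R ip \<Longrightarrow> F \<in> R \<Longrightarrow> fmul (indicator \<Omega>) F = F"
proof (rule ext)
  fix w assume "quasi_free \<Omega> R ip" "F \<in> R"
  then show "fmul (indicator \<Omega>) F w = F w"
    using quasi_free_vanishing[of \<Omega> R ip F w] by (cases "w \<in> \<Omega>") simp_all
qed

lemma fcomb_mem_delta_graph:
  assumes q: "quasi_free \<Omega> R ip" and q': "quasi_free \<Omega> R' ip'"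
    and f: "\<forall>i. f i \<in> R" and g: "\<forall>i. g i \<in> R'"
  shows "(fcomb f c, fcomb g c) \<in> delta_graph \<Omega> R ip R' ip' f g"
proof -
  interpret A: vfun_inner_space R ip using q by (rule quasi_free_inner_space)
  interpret B: vfun_inner_space R' ip' using q' by (rule quasi_free_inner_space)
  let ?P = "{(fmul \<phi> (f i), fmul \<phi> (g i)) | \<phi> i. \<phi> \<in> AOm \<Omega>}"
  have "(fmul (indicator \<Omega>) (f i), fmul (indicator \<Omega>) (g i)) \<in> ?P" for i
    by (intro CollectI exI[of _ "indicator \<Omega>"] exI[of _ i] conjI refl AOm_indicator)
  then have "(f i, g i) \<in> ?P" for i
    using fmul_indicator[OF q] fmul_indicator[OF q'] f g by simp
  then have "(f i, g i) \<in> pspan ?P" for i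
    by (rule subsetD[OF pspan_superset])
  then have P: "(fcomb f c, fcomb g c) \<in> pspan ?P"
    by (intro pair_fsubspace_fcomb[OF pspan_pair_fsubspace]) blast
  have "fsub (fcomb f c) (fcomb f c) = (\<lambda>w. 0)" "fsub (fcomb g c) (fcomb g c) = (\<lambda>w. 0)"
    by (simp_all add: fun_eq_iff)
  then have "sqrt ((hnorm ip (fsub (fcomb f c) (fcomb f c)))\<^sup>2
      + (hnorm ip' (fsub (fcomb g c) (fcomb g c)))\<^sup>2) = 0"
    by (simp add: A.hnorm_zero B.hnorm_zero)
  then have "\<forall>\<epsilon>>0. \<exists>(F0,G0)\<in>pspan ?P.
      sqrt ((hnorm ip (fsub (fcomb f c) F0))\<^sup>2 + (hnorm ip' (fsub (fcomb g c) G0))\<^sup>2) < \<epsilon>"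
    using P by (intro allI impI bexI[of _ "(fcomb f c, fcomb g c)"]) simp_all
  then show ?thesis
    using A.fcomb_mem[OF f] B.fcomb_mem[OF g] by (simp add: delta_graph_def)
qed

lemma pspan_generators_fcomb_cong:
  assumes q: "quasi_free \<Omega> R ip" and q': "quasi_free \<Omega> R' ip'" and z: "z \<in> \<Omega>"
    and f: "\<forall>i. f i \<in> R" and g: "\<forall>i. g i \<in> R'"
    and FG: "(F, G) \<in> pspan {(fmul \<phi> (f i), fmul \<phi> (g i)) | \<phi> i. \<phi> \<in> AOm \<Omega>}"
  shows "F \<in> R \<and> G \<in> R' \<and>
    (\<exists>c. fsub F (fcomb f c) \<in> locsub \<Omega> R ip z \<and> fsub G (fcomb g c) \<in> locsub \<Omega> R' ip' z)"
proof -
  interpret A: vfun_inner_space R ip using q by (rule quasi_free_inner_space)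
  interpret B: vfun_inner_space R' ip' using q' by (rule quasi_free_inner_space)
  let ?V = "{(F, G). F \<in> R \<and> G \<in> R' \<and>
    (\<exists>c. fsub F (fcomb f c) \<in> locsub \<Omega> R ip z \<and> fsub G (fcomb g c) \<in> locsub \<Omega> R' ip' z)}"
  have "(fmul \<phi> (f i), fmul \<phi> (g i)) \<in> ?V" if \<phi>: "\<phi> \<in> AOm \<Omega>" for \<phi> i
  proof -
    have "fsub (fmul \<phi> (f i)) (fcomb f (axis i (\<phi> z))) \<in> locsub \<Omega> R ip z"
      "fsub (fmul \<phi> (g i)) (fcomb g (axis i (\<phi> z))) \<in> locsub \<Omega> R' ip' z"
      unfolding fcomb_axis using fmul_fscale_cong_locsub[OF q z \<phi>] fmul_fscale_cong_locsub[OF q' z \<phi>] f g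
      by simp_all
    moreover have "fmul \<phi> (f i) \<in> R" "fmul \<phi> (g i) \<in> R'"
      using quasi_free_fmul_mem[OF q \<phi>] quasi_free_fmul_mem[OF q' \<phi>] f g by simp_all
    ultimately show ?thesis by (simp only: mem_Collect_eq case_prod_conv) blast
  qed
  then have "{(fmul \<phi> (f i), fmul \<phi> (g i)) | \<phi> i. \<phi> \<in> AOm \<Omega>} \<subseteq> ?V" by blast
  moreover have "pair_fsubspace ?V"
    using A.fsubspace_self B.fsubspace_self locsub_fsubspace[OF q] locsub_fsubspace[OF q']
    by (rule pair_fsubspace_fcomb_cong)
  ultimately have "pspan {(fmul \<phi> (f i), fmul \<phi> (g i)) | \<phi> i. \<phi> \<in> AOm \<Omega>} \<subseteq> ?V"
    by (rule pspan_minimal)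
  then show ?thesis using FG by (simp only: subset_iff mem_Collect_eq case_prod_conv) blast
qed

lemma delta_graph_fcomb_cong:
  assumes q: "quasi_free \<Omega> R ip" and q': "quasi_free \<Omega> R' ip'" and z: "z \<in> \<Omega>"
    and gen: "gen_set \<Omega> R ip f" and g: "\<forall>i. g i \<in> R'"
    and hk: "(h, k) \<in> delta_graph \<Omega> R ip R' ip' f g"
  shows "\<exists>a. fsub h (fcomb f a) \<in> locsub \<Omega> R ip z \<and> fsub k (fcomb g a) \<in> locsub \<Omega> R' ip' z"
proof -
  interpret A: vfun_inner_space R ip using q by (rule quasi_free_inner_space)
  interpret B: vfun_inner_space R' ip' using q' by (rule quasi_free_inner_space)
  define L where "L = locsub \<Omega> R ip z"
  define L' where "L' = locsub \<Omega> R' ip' z"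
  have L: "fsubspace R L" and L': "fsubspace R' L'"
    unfolding L_def L'_def using locsub_fsubspace[OF q] locsub_fsubspace[OF q'] by blast+
  have f: "\<forall>i. f i \<in> R" using gen_set_mem[OF gen] by blast
  have h: "h \<in> R" and k: "k \<in> R'" using hk by (simp_all add: delta_graph_def)
  obtain a where a: "fsub h (fcomb f a) \<in> L"
    using gen_set_fcomb_cong[OF gen z h] unfolding L_def ..
  obtain \<mu> where \<mu>: "\<mu> > 0" "\<forall>c. \<mu> * norm c \<le> qnorm ip L (fcomb f c)"
    using gen_set_qnorm_fcomb_lower_bound[OF q gen z] unfolding L_def by blast
  define M where "M = (\<Sum>i\<in>UNIV. hnorm ip' (g i))"
  have M: "M \<ge> 0" unfolding M_def using g by (simp add: sum_nonneg B.hnorm_nonneg)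
  have k_a: "fsub k (fcomb g a) \<in> R'" using k g by (intro B.fsub_mem B.fcomb_mem)
  (* The coefficients of approximating pairs converge to a, by the lower bound on quotient norms. *)
  have "qnorm ip' L' (fsub k (fcomb g a)) \<le> 0 + e" if e: "e > 0" for e
  proof -
    define \<epsilon> where "\<epsilon> = e / (1 + M / \<mu>)"
    have \<epsilon>: "\<epsilon> > 0" unfolding \<epsilon>_def using e \<mu>(1) M by (simp add: add_pos_nonneg)
    obtain F G where FG: "(F, G) \<in> pspan {(fmul \<phi> (f i), fmul \<phi> (g i)) | \<phi> i. \<phi> \<in> AOm \<Omega>}"
      "sqrt ((hnorm ip (fsub h F))\<^sup>2 + (hnorm ip' (fsub k G))\<^sup>2) < \<epsilon>"
      using hk \<epsilon> unfolding delta_graph_def by blast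
    obtain c where c: "F \<in> R" "G \<in> R'" "fsub F (fcomb f c) \<in> L" "fsub G (fcomb g c) \<in> L'"
      using pspan_generators_fcomb_cong[OF q q' z f g FG(1)] unfolding L_def L'_def by blast
    have "hnorm ip (fsub h F) < \<epsilon>" "hnorm ip' (fsub k G) < \<epsilon>"
      using FG(2) real_sqrt_sum_squares_ge1 real_sqrt_sum_squares_ge2 order.strict_trans1 by blast+
    moreover have "\<mu> * norm (c - a) \<le> hnorm ip (fsub h F)"
      using A.fcomb_coeff_dist_le[OF L f \<mu>(2) h a c(1,3)] .
    ultimately have "hnorm ip' (fsub k G) + norm (c - a) * M \<le> \<epsilon> + \<epsilon> / \<mu> * M"
      using \<mu>(1) M by (intro add_mono mult_right_mono) (auto simp: field_simps)
    also have "\<dots> = \<epsilon> * (1 + M / \<mu>)" by (simp add: algebra_simps)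
    also have "\<dots> = e" unfolding \<epsilon>_def using \<mu>(1) M by (simp add: add_pos_nonneg add_nonneg_eq_0_iff)
    finally show ?thesis
      using B.qnorm_fsub_fcomb_le[OF L' g k c(2,4), of a] unfolding M_def by simp
  qed
  then have "qnorm ip' L' (fsub k (fcomb g a)) \<le> 0" by (rule field_le_epsilon)
  then have "fsub k (fcomb g a) \<in> L'"
    using B.qnorm_eq_0_imp_mem[OF L' _ k_a] hclosure_locsub[OF q'] unfolding L'_def by blast
  then show ?thesis using a unfolding L_def L'_def by blast
qed

(* The other half of the theorem is this lemma with the two modules exchanged. *)
lemma fcomb_correspondence:
  assumes "vfun_inner_space R ip" "vfun_inner_space R' ip'"
    and L: "fsubspace R L" and L': "fsubspace R' L'"
    and f: "\<forall>i. f i \<in> R" and g: "\<forall>i. g i \<in> R'"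
    and \<mu>: "\<mu> > 0" "\<forall>c. \<mu> * norm c \<le> qnorm ip L (fcomb f c)"
    and span: "\<forall>k\<in>R'. \<exists>a. fsub k (fcomb g a) \<in> L'"
    and G: "G \<subseteq> R \<times> R'"
    and G_cong: "\<forall>(h, k)\<in>G. \<exists>a. fsub h (fcomb f a) \<in> L \<and> fsub k (fcomb g a) \<in> L'"
    and G_fcomb: "\<forall>a. (fcomb f a, fcomb g a) \<in> G"
  shows "(\<forall>(h, k)\<in>G. \<forall>(h', k')\<in>G. fsub h h' \<in> L \<longrightarrow> fsub k k' \<in> L')
    \<and> (\<forall>k\<in>R'. \<exists>(h, k0)\<in>G. fsub k0 k \<in> L')
    \<and> (\<exists>C. \<forall>(h, k)\<in>G. qnorm ip' L' k \<le> C * qnorm ip L h)"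
proof (intro conjI)
  interpret A: vfun_inner_space R ip by fact
  interpret B: vfun_inner_space R' ip' by fact
  have indep: "a = a'" if "fsub (fcomb f a) (fcomb f a') \<in> L" for a a'
  proof -
    have "\<mu> * norm (a - a') \<le> 0"
      using \<mu>(2) A.qnorm_eq_0_if_mem[OF L that] by (metis fcomb_diff)
    then show ?thesis using \<mu>(1) by (simp add: mult_le_0_iff)
  qed
  show "\<forall>(h, k)\<in>G. \<forall>(h', k')\<in>G. fsub h h' \<in> L \<longrightarrow> fsub k k' \<in> L'"
  proof (clarify)
    fix h k h' k' assume hk: "(h, k) \<in> G" "(h', k') \<in> G" and hh': "fsub h h' \<in> L"
    obtain a a' where a: "fsub h (fcomb f a) \<in> L" "fsub k (fcomb g a) \<in> L'"
      and a': "fsub h' (fcomb f a') \<in> L" "fsub k' (fcomb g a') \<in> L'"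
      using G_cong hk by blast
    have "fsub (fcomb f a) (fcomb f a') \<in> L"
      using fsubspace_fsub_trans[OF L fsubspace_fsub_commute[OF L a(1)]
          fsubspace_fsub_trans[OF L hh' a'(1)]] .
    then have "a = a'" by (rule indep)
    then have "fsub (fcomb g a) k' \<in> L'"
      using fsubspace_fsub_commute[OF L' a'(2)] by simp
    then show "fsub k k' \<in> L'" by (rule fsubspace_fsub_trans[OF L' a(2)])
  qed
  show "\<forall>k\<in>R'. \<exists>(h, k0)\<in>G. fsub k0 k \<in> L'"
    using span G_fcomb fsubspace_fsub_commute[OF L'] by blast
  define M where "M = (\<Sum>i\<in>UNIV. hnorm ip' (g i))"
  have "qnorm ip' L' k \<le> M / \<mu> * qnorm ip L h" if hk: "(h, k) \<in> G" for h k
  proof -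
    have h: "h \<in> R" and k: "k \<in> R'" using G hk by auto
    obtain a where a: "fsub h (fcomb f a) \<in> L" "fsub k (fcomb g a) \<in> L'" using G_cong hk by blast
    have "qnorm ip' L' k = qnorm ip' L' (fcomb g a)"
      using B.qnorm_cong[OF L' k B.fcomb_mem[OF g] a(2)] .
    also have "\<dots> \<le> norm a * M"
      unfolding M_def using B.qnorm_le_hnorm[OF L' B.fcomb_mem[OF g], of a] B.hnorm_fcomb_le[OF g, of a]
      by (rule order_trans)
    also have "\<dots> \<le> qnorm ip L h / \<mu> * M"
    proof (rule mult_right_mono)
      have "\<mu> * norm a \<le> qnorm ip L h"
        using \<mu>(2) A.qnorm_cong[OF L h A.fcomb_mem[OF f] a(1)] by simp
      then show "norm a \<le> qnorm ip L h / \<mu>" using \<mu>(1) by (simp add: field_simps)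
      show "0 \<le> M" unfolding M_def using g by (simp add: sum_nonneg B.hnorm_nonneg)
    qed
    finally show ?thesis by (simp add: mult.commute)
  qed
  then show "\<exists>C. \<forall>(h, k)\<in>G. qnorm ip' L' k \<le> C * qnorm ip L h" by blast
qed

theorem lemma2:
  fixes \<Omega> :: "(complex^'n) set"
    and R R' :: "(complex^'n \<Rightarrow> complex^'m::finite) set"
    and ip ip' :: "(complex^'n \<Rightarrow> complex^'m) \<Rightarrow> (complex^'n \<Rightarrow> complex^'m) \<Rightarrow> complex"
    and f g :: "'m \<Rightarrow> (complex^'n \<Rightarrow> complex^'m)"
    and z :: "complex^'n"
  assumes "open \<Omega>" "connected \<Omega>" "bounded \<Omega>" "\<Omega> \<noteq> {}"
    and "quasi_free \<Omega> R ip" "quasi_free \<Omega> R' ip'"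
    and "gen_set \<Omega> R ip f" "gen_set \<Omega> R' ip' g"
    and "z \<in> \<Omega>"
  shows
    "(\<forall>(h,k)\<in>delta_graph \<Omega> R ip R' ip' f g. \<forall>(h',k')\<in>delta_graph \<Omega> R ip R' ip' f g.
        fsub h h' \<in> locsub \<Omega> R ip z \<longrightarrow> fsub k k' \<in> locsub \<Omega> R' ip' z)
   \<and> (\<forall>h\<in>R. \<exists>(h0,k)\<in>delta_graph \<Omega> R ip R' ip' f g. fsub h0 h \<in> locsub \<Omega> R ip z)
   \<and> (\<forall>(h,k)\<in>delta_graph \<Omega> R ip R' ip' f g. \<forall>(h',k')\<in>delta_graph \<Omega> R ip R' ip' f g.
        fsub k k' \<in> locsub \<Omega> R' ip' z \<longrightarrow> fsub h h' \<in> locsub \<Omega> R ip z)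
   \<and> (\<forall>k\<in>R'. \<exists>(h,k0)\<in>delta_graph \<Omega> R ip R' ip' f g. fsub k0 k \<in> locsub \<Omega> R' ip' z)
   \<and> (\<exists>C. \<forall>(h,k)\<in>delta_graph \<Omega> R ip R' ip' f g.
        qnorm ip' (locsub \<Omega> R' ip' z) k \<le> C * qnorm ip (locsub \<Omega> R ip z) h)
   \<and> (\<exists>C. \<forall>(h,k)\<in>delta_graph \<Omega> R ip R' ip' f g.
        qnorm ip (locsub \<Omega> R ip z) h \<le> C * qnorm ip' (locsub \<Omega> R' ip' z) k)"
proof -
  note q = assms(5) and q' = assms(6) and z = assms(9)
  let ?G = "delta_graph \<Omega> R ip R' ip' f g"
  let ?G' = "{(k, h). (h, k) \<in> ?G}"
  have f: "\<forall>i. f i \<in> R" and g: "\<forall>i. g i \<in> R'" using gen_set_mem assms(7,8) by blast+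
  have cong: "\<forall>(h, k)\<in>?G. \<exists>a. fsub h (fcomb f a) \<in> locsub \<Omega> R ip z \<and> fsub k (fcomb g a) \<in> locsub \<Omega> R' ip' z"
    using delta_graph_fcomb_cong[OF q q' z assms(7) g] by blast
  have fcomb: "\<forall>a. (fcomb f a, fcomb g a) \<in> ?G" using fcomb_mem_delta_graph[OF q q' f g] by blast
  have G: "?G \<subseteq> R \<times> R'" by (auto simp: delta_graph_def)
  obtain \<mu> where \<mu>: "\<mu> > 0" "\<forall>c. \<mu> * norm c \<le> qnorm ip (locsub \<Omega> R ip z) (fcomb f c)"
    using gen_set_qnorm_fcomb_lower_bound[OF q assms(7) z] by blast
  obtain \<mu>' where \<mu>': "\<mu>' > 0" "\<forall>c. \<mu>' * norm c \<le> qnorm ip' (locsub \<Omega> R' ip' z) (fcomb g c)"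
    using gen_set_qnorm_fcomb_lower_bound[OF q' assms(8) z] by blast
  note spaces = quasi_free_inner_space[OF q] quasi_free_inner_space[OF q']
    locsub_fsubspace[OF q] locsub_fsubspace[OF q']
  have span: "\<forall>h\<in>R. \<exists>a. fsub h (fcomb f a) \<in> locsub \<Omega> R ip z"
    and span': "\<forall>k\<in>R'. \<exists>a. fsub k (fcomb g a) \<in> locsub \<Omega> R' ip' z"
    using gen_set_fcomb_cong assms(7,8) z by blast+
  have G': "?G' \<subseteq> R' \<times> R" using G by auto
  have cong': "\<forall>(k, h)\<in>?G'. \<exists>a. fsub k (fcomb g a) \<in> locsub \<Omega> R' ip' z \<and> fsub h (fcomb f a) \<in> locsub \<Omega> R ip z"
    using cong by auto
  have fcomb': "\<forall>a. (fcomb g a, fcomb f a) \<in> ?G'" using fcomb by simp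
  have swap: "(\<forall>(k, h)\<in>?G'. P k h) = (\<forall>(h, k)\<in>?G. P k h)"
    "(\<exists>(k, h)\<in>?G'. P k h) = (\<exists>(h, k)\<in>?G. P k h)" for P :: "_ \<Rightarrow> _ \<Rightarrow> bool"
    by auto
  show ?thesis
    using fcomb_correspondence[OF spaces f g \<mu> span' G cong fcomb]
      fcomb_correspondence[OF spaces(2,1,4,3) g f \<mu>' span G' cong' fcomb']
    unfolding swap by blast
qed

end
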